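(* Let $M,K$ be real symmetric positive definite $N\times N$ matrices, $\Delta t>0$, and let $(q_n)_{n\ge0}$ satisfy the implicit Euler recursion $(M+\Delta tK)q_{n+1}=Mq_n+\Delta t f_{n+1}$, i.e. $(\frac{M}{\Delta t}+K)q_{n+1}=\frac M{\Delta t}q_n+f_{n+1}$, for given vectors $f_{n+1}\in\mathbb{R}^N$. Write $\|q\|_\zeta^2:=q^T(\frac M{\Delta t}+K)q$ and $\|f\|_{H^{-1}(\Omega)}:=\sqrt{f^TK^{-1}f}$. Then for every $n\ge0$, $$\|q_{n+1}\|_\zeta\le\|q_n\|_\zeta+\|f_{n+1}\|_{H^{-1}(\Omega)}.$$
   Context: In the paper $M$ and $K$ are the finite-element mass and stiffness matrices $M_{ij}=\int_\Omega\varphi_i\varphi_j\mu$, $K_{ij}=\int_\Omega(\nabla\varphi_i)^Ta\nabla\varphi_j$ of a parabolic problem $\mu\partial_tu-\mathrm{div}(a\nabla u)=g$ with $f_{n,i}=\int_\Omega\varphi_ig(\cdot,n\Delta t)$; only their symmetry and positive definiteness are used. *)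

theory Defs
  imports "HOL-Analysis.Analysis"
begin

definition sym_pos_def_mat :: "real^'n^'n \<Rightarrow> bool" where
  "sym_pos_def_mat A \<longleftrightarrow> transpose A = A \<and> (\<forall>x. x \<noteq> 0 \<longrightarrow> x \<bullet> (A *v x) > 0)"

definition zeta_norm :: "real^'n^'n \<Rightarrow> real^'n^'n \<Rightarrow> real \<Rightarrow> real^'n \<Rightarrow> real" where
  "zeta_norm M K dt q = sqrt (q \<bullet> (((1 / dt) *\<^sub>R M + K) *v q))"

definition Hm1_norm :: "real^'n^'n \<Rightarrow> real^'n \<Rightarrow> real" where
  "Hm1_norm K f = sqrt (f \<bullet> (matrix_inv K *v f))"

end

theory Submission
  imports Defs
begin

text \<open>
  With \<open>P = M / \<Delta>t\<close> the scheme reads \<open>(P + K) x = P y + f\<close> for \<open>x = q(n+1)\<close>,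
  \<open>y = q(n)\<close>, and \<open>\<parallel>x\<parallel>\<^sub>\<zeta>\<^sup>2 = x \<bullet> (P + K) x\<close>. Testing with \<open>x\<close> and writing
  \<open>f = K (K\<^sup>-\<^sup>1 f)\<close>, the Cauchy-Schwarz inequality for the forms of \<open>P\<close> and \<open>K\<close> gives
  \<open>\<parallel>x\<parallel>\<^sub>\<zeta>\<^sup>2 \<le> \<parallel>x\<parallel>\<^sub>P \<parallel>y\<parallel>\<^sub>P + \<parallel>x\<parallel>\<^sub>K \<parallel>f\<parallel>\<^sub>K\<^sub>\<^sup>-\<^sub>\<^sup>1\<close>. Both the \<open>P\<close>- and the \<open>K\<close>-seminorm are dominated
  by the \<open>\<zeta>\<close>-norm, so dividing by \<open>\<parallel>x\<parallel>\<^sub>\<zeta>\<close> gives the estimate.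
\<close>

definition sym_psd_mat :: "real^'n^'n \<Rightarrow> bool" where
  "sym_psd_mat A \<longleftrightarrow> transpose A = A \<and> (\<forall>x. 0 \<le> x \<bullet> (A *v x))"

lemma sym_pos_def_imp_sym_psd_mat: "sym_pos_def_mat A \<Longrightarrow> sym_psd_mat A"
  unfolding sym_pos_def_mat_def sym_psd_mat_def by (metis inner_zero_left less_eq_real_def)

lemma sym_psd_mat_scaleR:
  assumes "sym_psd_mat A" and "0 \<le> c"
  shows "sym_psd_mat (c *\<^sub>R A)"
  using assms unfolding sym_psd_mat_def
  by (simp add: transpose_scalar scaleR_matrix_vector_assoc[symmetric])

lemma quadratic_form_le_add_psd:
  assumes "sym_psd_mat B"
  shows "x \<bullet> (A *v x) \<le> x \<bullet> ((A + B) *v x)"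
  using assms unfolding sym_psd_mat_def
  by (simp add: matrix_vector_mult_add_rdistrib inner_add_right)

lemma transpose_add: "transpose (A + B) = transpose A + transpose B"
  by (simp add: transpose_def vec_eq_iff)

lemma sym_psd_mat_add:
  assumes "sym_psd_mat A" and "sym_psd_mat B"
  shows "sym_psd_mat (A + B)"
  using assms unfolding sym_psd_mat_def
  by (simp add: transpose_add matrix_vector_mult_add_rdistrib inner_add_right add_nonneg_nonneg)

lemma bilinear_form_commute:
  fixes B :: "real^'n^'n"
  assumes "transpose B = B"
  shows "x \<bullet> (B *v y) = y \<bullet> (B *v x)"
proof -
  have "x \<bullet> (B *v y) = (x v* B) \<bullet> y"
    by (rule dot_lmul_matrix[symmetric])
  also have "x v* B = transpose B *v x"
    by simp
  finally show ?thesis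
    using assms by (simp add: inner_commute)
qed

lemma nonneg_quadratic_imp_discrim_le:
  fixes a b c :: real
  assumes nonneg: "\<And>t. 0 \<le> a + 2 * t * b + t\<^sup>2 * c" and "0 \<le> c"
  shows "b\<^sup>2 \<le> a * c"
proof (cases "c = 0")
  case True
  have "b = 0"
  proof (rule ccontr)
    assume "b \<noteq> 0"
    then show False
      using nonneg[of "- (a + 1) / (2 * b)"] True by (simp add: field_simps)
  qed
  with True show ?thesis by simp
next
  case False
  with \<open>0 \<le> c\<close> have "0 < c" by simp
  moreover have "0 \<le> a + 2 * (- b / c) * b + (- b / c)\<^sup>2 * c"
    by (rule nonneg)
  ultimately show ?thesis
    by (simp add: power2_eq_square field_simps)
qed

lemma bilinear_form_Cauchy_Schwarz:
  assumes "sym_psd_mat B"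
  shows "x \<bullet> (B *v y) \<le> sqrt (x \<bullet> (B *v x)) * sqrt (y \<bullet> (B *v y))"
proof -
  have sym: "transpose B = B" and psd: "\<And>z. 0 \<le> z \<bullet> (B *v z)"
    using assms unfolding sym_psd_mat_def by auto
  have "0 \<le> x \<bullet> (B *v x) + 2 * t * (x \<bullet> (B *v y)) + t\<^sup>2 * (y \<bullet> (B *v y))" for t
  proof -
    have "0 \<le> (x + t *\<^sub>R y) \<bullet> (B *v (x + t *\<^sub>R y))"
      by (rule psd)
    also have "\<dots> = x \<bullet> (B *v x) + 2 * t * (x \<bullet> (B *v y)) + t\<^sup>2 * (y \<bullet> (B *v y))"
      using bilinear_form_commute[OF sym, of y x]
      by (simp add: algebra_simps inner_add_left inner_add_right power2_eq_square)
    finally show ?thesis .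
  qed
  then have "(x \<bullet> (B *v y))\<^sup>2 \<le> x \<bullet> (B *v x) * (y \<bullet> (B *v y))"
    using psd by (rule nonneg_quadratic_imp_discrim_le)
  then show ?thesis
    by (metis real_le_rsqrt real_sqrt_mult)
qed

lemma sym_pos_def_mat_right_inverse:
  assumes "sym_pos_def_mat K"
  shows "K ** matrix_inv K = mat 1"
proof -
  have "\<exists>B. B ** K = mat 1"
    unfolding matrix_left_invertible_ker
    using assms unfolding sym_pos_def_mat_def by fastforce
  then have "invertible K"
    using invertible_left_inverse by blast
  then show ?thesis
    unfolding invertible_def matrix_inv_def by (metis (mono_tags, lifting) someI_ex)
qed

lemma inner_matrix_inv_eq_quadratic_form:
  assumes "sym_pos_def_mat K"
  shows "g \<bullet> (matrix_inv K *v g) = (matrix_inv K *v g) \<bullet> (K *v (matrix_inv K *v g))"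
  by (simp add: matrix_vector_mul_assoc sym_pos_def_mat_right_inverse[OF assms] inner_commute)

lemma inner_matrix_inv_nonneg:
  assumes "sym_pos_def_mat K"
  shows "0 \<le> g \<bullet> (matrix_inv K *v g)"
  using sym_pos_def_imp_sym_psd_mat[OF assms]
  by (simp add: inner_matrix_inv_eq_quadratic_form[OF assms] sym_psd_mat_def)

lemma inner_le_sqrt_quadratic_form_mult_dual:
  assumes "sym_pos_def_mat K"
  shows "x \<bullet> g \<le> sqrt (x \<bullet> (K *v x)) * sqrt (g \<bullet> (matrix_inv K *v g))"
proof -
  define h where "h = matrix_inv K *v g"
  have "x \<bullet> g = x \<bullet> (K *v h)"
    unfolding h_def by (simp add: matrix_vector_mul_assoc sym_pos_def_mat_right_inverse[OF assms])
  also have "\<dots> \<le> sqrt (x \<bullet> (K *v x)) * sqrt (h \<bullet> (K *v h))"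
    by (rule bilinear_form_Cauchy_Schwarz[OF sym_pos_def_imp_sym_psd_mat[OF assms]])
  also have "h \<bullet> (K *v h) = g \<bullet> (matrix_inv K *v g)"
    unfolding h_def by (rule inner_matrix_inv_eq_quadratic_form[OF assms, symmetric])
  finally show ?thesis .
qed

lemma implicit_step_energy_estimate:
  assumes P: "sym_psd_mat P" and K: "sym_pos_def_mat K"
    and step: "(P + K) *v x = P *v y + g"
  shows "sqrt (x \<bullet> ((P + K) *v x))
    \<le> sqrt (y \<bullet> ((P + K) *v y)) + sqrt (g \<bullet> (matrix_inv K *v g))"
proof -
  have K': "sym_psd_mat K"
    using K by (rule sym_pos_def_imp_sym_psd_mat)
  have A: "sym_psd_mat (P + K)"
    using P K' by (rule sym_psd_mat_add)
  define nx where "nx = sqrt (x \<bullet> ((P + K) *v x))"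
  define ny where "ny = sqrt (y \<bullet> ((P + K) *v y))"
  define ng where "ng = sqrt (g \<bullet> (matrix_inv K *v g))"
  have le_nx: "sqrt (x \<bullet> (P *v x)) \<le> nx" "sqrt (x \<bullet> (K *v x)) \<le> nx"
    unfolding nx_def using quadratic_form_le_add_psd[OF K', of x P]
      quadratic_form_le_add_psd[OF P, of x K] by (auto simp: add.commute)
  have le_ny: "sqrt (y \<bullet> (P *v y)) \<le> ny"
    unfolding ny_def using quadratic_form_le_add_psd[OF K', of y P] by simp
  have nonneg: "0 \<le> sqrt (x \<bullet> (P *v x))" "0 \<le> sqrt (y \<bullet> (P *v y))"
    "0 \<le> sqrt (x \<bullet> (K *v x))" "0 \<le> nx" "0 \<le> ny" "0 \<le> ng"
    using P K' A inner_matrix_inv_nonneg[OF K] by (simp_all add: sym_psd_mat_def nx_def ny_def ng_def)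
  have "nx\<^sup>2 = x \<bullet> ((P + K) *v x)"
    unfolding nx_def using A by (simp add: sym_psd_mat_def)
  also have "\<dots> = x \<bullet> (P *v y) + x \<bullet> g"
    by (simp add: step inner_add_right)
  also have "\<dots> \<le> sqrt (x \<bullet> (P *v x)) * sqrt (y \<bullet> (P *v y))
      + sqrt (x \<bullet> (K *v x)) * ng"
    unfolding ng_def
    by (intro add_mono bilinear_form_Cauchy_Schwarz inner_le_sqrt_quadratic_form_mult_dual P K)
  also have "\<dots> \<le> nx * ny + nx * ng"
    using le_nx le_ny nonneg by (intro add_mono mult_mono mult_right_mono) auto
  finally have "nx * nx \<le> nx * (ny + ng)"
    by (simp add: power2_eq_square distrib_left)
  then have "nx \<le> ny + ng"
    using nonneg(4-6) by (cases "nx = 0") (simp_all add: mult_le_cancel_left_pos)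
  then show ?thesis
    unfolding nx_def ny_def ng_def .
qed

theorem mainTheorem3:
  fixes M K :: "real^'n^'n" and dt :: real
    and q f :: "nat \<Rightarrow> real^'n"
  assumes "sym_pos_def_mat M" and "sym_pos_def_mat K" and "dt > 0"
    and "\<And>n. (M + dt *\<^sub>R K) *v q (Suc n) = M *v q n + dt *\<^sub>R f (Suc n)"
  shows "zeta_norm M K dt (q (Suc n)) \<le> zeta_norm M K dt (q n) + Hm1_norm K (f (Suc n))"
proof -
  define P where "P = (1 / dt) *\<^sub>R M"
  have P: "sym_psd_mat P"
    unfolding P_def using assms(1,3) by (simp add: sym_psd_mat_scaleR sym_pos_def_imp_sym_psd_mat)
  have "(1 / dt) *\<^sub>R ((M + dt *\<^sub>R K) *v q (Suc n)) = (1 / dt) *\<^sub>R (M *v q n + dt *\<^sub>R f (Suc n))"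
    by (simp add: assms(4))
  then have "(P + K) *v q (Suc n) = P *v q n + f (Suc n)"
    using assms(3) unfolding P_def
    by (simp add: matrix_vector_mult_add_rdistrib scaleR_matrix_vector_assoc[symmetric] scaleR_add_right)
  from implicit_step_energy_estimate[OF P assms(2) this]
  show ?thesis
    unfolding zeta_norm_def Hm1_norm_def P_def .
qed

end
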